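(* Let $n\geq 3$ be an integer and $p$ a prime with $\gcd(n,p(p-1))=1$. (1) Let $F(x,y)=ax^n+by^n$ with $a,b$ integers, $ab\neq 0$, and $\nu_p(a)\equiv\nu_p(b)\pmod n$. Then $R(F)$ is dense in $\mathbb{Q}_p$. (2) Let $r\geq 2$ and $F(x_1,\ldots,x_r)=a_1x_1^n+a_2x_2^n+\cdots+a_rx_r^n$ with $a_1,\ldots,a_r$ integers, $a_1a_2\cdots a_r\neq 0$, such that $\nu_p(a_i)\equiv\nu_p(a_j)\pmod n$ for some $1\leq i<j\leq r$. Then $R(F)$ is dense in $\mathbb{Q}_p$.
   Context: For an integral form $F$ in $r$ variables, $R(F)=\{F(\overline{x})/F(\overline{y}):\overline{x},\overline{y}\in\mathbb{Z}^r,\ F(\overline{y})\neq 0\}$, viewed as a subset of the field $\mathbb{Q}_p$ of $p$-adic numbers with its $p$-adic topology. $\nu_p$ denotes the $p$-adic valuation. *)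

theory Defs
  imports "HOL-Computational_Algebra.Computational_Algebra" "HOL-Number_Theory.Cong"
begin

definition padic_val :: "nat \<Rightarrow> rat \<Rightarrow> int" where
  "padic_val p q = (case quotient_of q of (a, b) \<Rightarrow>
      int (multiplicity (int p) a) - int (multiplicity (int p) b))"

definition padic_abs :: "nat \<Rightarrow> rat \<Rightarrow> real" where
  "padic_abs p q = (if q = 0 then 0 else real p powi (- padic_val p q))"

text \<open>A set of rationals is dense in Q_p iff every point of Q_p is a limit of it;
  since Q is dense in Q_p this is equivalent to: every rational is approximable
  arbitrarily well in the p-adic absolute value.\<close>
definition padic_dense :: "nat \<Rightarrow> rat set \<Rightarrow> bool" where
  "padic_dense p S \<longleftrightarrow> (\<forall>q::rat. \<forall>\<epsilon>::real. \<epsilon> > 0 \<longrightarrow> (\<exists>s\<in>S. padic_abs p (s - q) < \<epsilon>))"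

text \<open>R(F) for an integral form F, with integer vectors modelled as nat \<Rightarrow> int
  (F only depends on the first r coordinates).\<close>
definition ratio_set :: "((nat \<Rightarrow> int) \<Rightarrow> int) \<Rightarrow> rat set" where
  "ratio_set F = {of_int (F x) / of_int (F y) | x y. F y \<noteq> 0}"

end

(*
  Write a = p^\<alpha> a' and b = p^(\<alpha> + kn) b' with a', b' prime to p. As gcd(n, p(p - 1)) = 1,
  n is prime to \<phi>(p^M), so every unit mod p^M is an n-th power and a' s^n + b' t^n takes
  every residue mod p^M. A rational q can be written A / (p^e W) = A p^(e(n-1)) / (p^(en) W)
  with p not dividing W; choosing s, t with (a' s^n + b' t^n) W = a' A p^(e(n-1)) mod p^(N+en)
  makes F(p^k s, t) / F(p^(k+e), 0) = (a' s^n + b' t^n) / (p^(en) a') lie within p^(-N) of q.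
  For r variables, setting all coordinates but the i-th and j-th to 0 gives the binary case.
*)
theory Submission
  imports Defs "HOL-Number_Theory.Number_Theory"
begin

lemma cong_solve_nth_power:
  fixes m u :: int
  assumes "m > 0" "n > 0" "coprime n (totient (nat m))" "coprime u m"
  shows "\<exists>x. [x ^ n = u] (mod m)"
proof -
  have euler: "[u ^ totient (nat m) = 1] (mod m)"
  proof (cases "m = 1")
    case False
    then interpret residues m "residue_ring m" by unfold_locales (use \<open>m > 0\<close> in simp)
    show ?thesis using euler_theorem \<open>coprime u m\<close> .
  qed simp
  obtain d k where d: "n * d = totient (nat m) * k + 1"
    using bezout_nat[of n "totient (nat m)"] assms(2,3) by auto
  have "(u ^ d) ^ n = u * (u ^ totient (nat m)) ^ k"
    by (simp add: power_mult[symmetric] power_add[symmetric] mult.commute[of d] d)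
  also have "[\<dots> = u * 1 ^ k] (mod m)"
    by (intro cong_mult cong_pow euler cong_refl)
  finally show ?thesis by auto
qed

lemma cong_solve_coprime_times_nth_power:
  fixes a c m :: int
  assumes "m > 0" "n > 0" "coprime n (totient (nat m))" "coprime a m" "coprime c m"
  shows "\<exists>s. [a * s ^ n = c] (mod m)"
proof -
  obtain a' where a': "[a * a' = 1] (mod m)"
    using cong_solve_coprime_int \<open>coprime a m\<close> by blast
  then have "coprime a' m"
    by (metis coprime_iff_invertible_int mult.commute)
  with assms obtain s where s: "[s ^ n = a' * c] (mod m)"
    using cong_solve_nth_power by (meson coprime_mult_left_iff)
  have "[a * s ^ n = (a * a') * c] (mod m)"
    using cong_scalar_left[OF s] by (simp add: mult.assoc)
  also have "[(a * a') * c = 1 * c] (mod m)"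
    by (intro cong_scalar_right a')
  finally show ?thesis by auto
qed

lemma coprime_totient_prime_power:
  assumes "prime p" "coprime n (p * (p - 1))"
  shows "coprime n (totient (p ^ M))"
  using assms by (cases "M = 0") (simp_all add: totient_prime_power)

text \<open>Modulo a prime power, a diagonal binary form with unit coefficients represents
  every residue: take \<open>t = 0\<close> for a unit target and \<open>t = 1\<close> otherwise, so that the
  residue left for \<open>a s\<^sup>n\<close> is always a unit.\<close>
lemma cong_solve_binary_form_prime_power:
  fixes a b c :: int
  assumes p: "prime p" and "n > 0" "coprime n (totient (p ^ M))"
    and "\<not> int p dvd a" "\<not> int p dvd b"
  shows "\<exists>s t. [a * s ^ n + b * t ^ n = c] (mod int p ^ M)"
proof -
  have coprime_pM: "coprime x (int p ^ M)" if "\<not> int p dvd x" for x :: int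
    using prime_imp_coprime[of "int p" x] that p by (simp add: coprime_commute)
  define t :: int where "t = (if int p dvd c then 1 else 0)"
  have "\<not> int p dvd c - b * t ^ n"
  proof (cases "int p dvd c")
    case True
    then show ?thesis
      using dvd_diff[OF True, of "c - b"] \<open>\<not> int p dvd b\<close> by (auto simp: t_def)
  qed (use \<open>n > 0\<close> in \<open>simp add: t_def power_0_left\<close>)
  with assms obtain s where "[a * s ^ n = c - b * t ^ n] (mod int p ^ M)"
    using cong_solve_coprime_times_nth_power[of "int p ^ M" n a "c - b * t ^ n"] coprime_pM
    by (auto simp: nat_power_eq prime_gt_0_nat)
  then have "[a * s ^ n + b * t ^ n = c - b * t ^ n + b * t ^ n] (mod int p ^ M)"
    by (intro cong_add cong_refl)
  then show ?thesis by auto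
qed

lemma padic_abs_le_if_prime_power_dvd:
  fixes X Y :: int
  assumes p: "prime p" and "int p ^ N dvd X" "\<not> int p dvd Y"
  shows "padic_abs p (of_int X / of_int Y) \<le> 1 / real p ^ N"
proof (cases "X = 0")
  case False
  define x :: rat where "x = of_int X / of_int Y"
  have Y: "Y \<noteq> 0" using \<open>\<not> int p dvd Y\<close> by auto
  have pi: "prime (int p)" and p2: "p \<ge> 2" using p prime_ge_2_nat by auto
  obtain A B where AB: "quotient_of x = (A, B)" by (cases "quotient_of x")
  have B: "B > 0" and xAB: "x = of_int A / of_int B"
    using quotient_of_denom_pos[OF AB] quotient_of_div[OF AB] by auto
  have "x \<noteq> 0" using False Y by (simp add: x_def)
  then have A: "A \<noteq> 0" using xAB by auto
  have "of_int (A * Y) = (of_int (X * B) :: rat)"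
    using xAB B Y by (simp add: x_def field_simps)
  then have "A * Y = X * B" by (simp only: of_int_eq_iff)
  then have "multiplicity (int p) A = multiplicity (int p) X + multiplicity (int p) B"
    using A B Y False pi \<open>\<not> int p dvd Y\<close>
    by (metis not_dvd_imp_multiplicity_0 prime_elem_multiplicity_mult_distrib prime_imp_prime_elem
        add_0_right less_irrefl)
  moreover have "multiplicity (int p) X \<ge> N"
    using \<open>int p ^ N dvd X\<close> False pi by (intro multiplicity_geI) (auto simp: prime_int_iff)
  ultimately have "padic_val p x \<ge> int N" by (simp add: padic_val_def AB)
  then have "real p powi (- padic_val p x) \<le> real p powi (- int N)"
    using p2 by (intro power_int_increasing) auto
  then show ?thesis
    using \<open>x \<noteq> 0\<close> by (simp add: padic_abs_def x_def power_int_minus divide_inverse)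
qed (simp add: padic_abs_def)

lemma padic_abs_diff_le_if_cong:
  fixes X Y U W :: int
  assumes p: "prime p" and U: "\<not> int p dvd U" and W: "\<not> int p dvd W"
    and cong: "[X * W = Y * U] (mod int p ^ (N + E))"
  shows "padic_abs p (of_int X / (of_nat p ^ E * of_int U) - of_int Y / (of_nat p ^ E * of_int W))
    \<le> 1 / real p ^ N"
proof -
  obtain Z where Z: "X * W - Y * U = int p ^ (N + E) * Z"
    using cong by (auto simp: cong_iff_dvd_diff dvd_def)
  have "U \<noteq> 0" "W \<noteq> 0" "p \<noteq> 0" using U W p by auto
  then have "of_int X / (of_nat p ^ E * of_int U) - of_int Y / (of_nat p ^ E * of_int W)
      = (of_int (int p ^ N * Z) / of_int (U * W) :: rat)"
    using arg_cong[OF Z, of "of_int :: int \<Rightarrow> rat"] by (simp add: field_simps power_add)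
  also have "padic_abs p \<dots> \<le> 1 / real p ^ N"
    using U W p by (intro padic_abs_le_if_prime_power_dvd) (auto simp: prime_dvd_mult_iff)
  finally show ?thesis .
qed

lemma rat_eq_div_prime_power_times_coprime:
  fixes q :: rat
  assumes "prime p"
  obtains e :: nat and A W :: int where "\<not> int p dvd W" "q = of_int A / (of_nat p ^ e * of_int W)"
proof -
  obtain A B where AB: "quotient_of q = (A, B)" by (cases "quotient_of q")
  have "B \<noteq> 0" and q: "q = of_int A / of_int B"
    using quotient_of_denom_pos[OF AB] quotient_of_div[OF AB] by auto
  moreover have "\<not> is_unit (int p)" using assms prime_gt_1_nat[of p] by simp
  ultimately obtain W where B: "B = int p ^ multiplicity (int p) B * W" "\<not> int p dvd W"
    using multiplicity_decompose' by blast
  have "q = of_int A / (of_nat p ^ multiplicity (int p) B * of_int W)"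
    by (subst q, subst B(1)) simp
  with B(2) show ?thesis by (rule that)
qed

lemma binary_form_ratio_mem_ratio_set:
  fixes a b a' b' P s t :: int
  assumes "P \<noteq> 0" "a' \<noteq> 0" "n > 0" "a = P ^ \<alpha> * a'" "b = P ^ (k * n + \<alpha>) * b'"
  shows "of_int (a' * s ^ n + b' * t ^ n) / (of_int P ^ (e * n) * of_int a')
    \<in> ratio_set (\<lambda>v. a * v 0 ^ n + b * v 1 ^ n)"
proof -
  define u :: "nat \<Rightarrow> int" where "u = (\<lambda>i. if i = 0 then P ^ k * s else t)"
  define u' :: "nat \<Rightarrow> int" where "u' = (\<lambda>i. if i = 0 then P ^ (k + e) else 0)"
  have "a * u 0 ^ n + b * u 1 ^ n = P ^ (k * n + \<alpha>) * (a' * s ^ n + b' * t ^ n)"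
    by (simp add: assms(4,5) u_def power_mult_distrib power_add power_mult[symmetric] algebra_simps)
  moreover have "a * u' 0 ^ n + b * u' 1 ^ n = P ^ (k * n + \<alpha>) * (P ^ (e * n) * a')"
    using \<open>n > 0\<close> by (simp add: assms(4) u'_def power_mult_distrib power_add
        power_mult[symmetric] algebra_simps)
  ultimately have "of_int (a' * s ^ n + b' * t ^ n) / (of_int P ^ (e * n) * of_int a')
      = (of_int (a * u 0 ^ n + b * u 1 ^ n) / of_int (a * u' 0 ^ n + b * u' 1 ^ n) :: rat)"
    and "a * u' 0 ^ n + b * u' 1 ^ n \<noteq> 0"
    using assms(1,2) by auto
  then show ?thesis
    unfolding ratio_set_def by blast
qed

lemma binary_form_ratios_approximate:
  fixes a b :: int and q :: rat
  assumes p: "prime p" and n: "n > 0" and coprime_n: "coprime n (p * (p - 1))"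
    and "a \<noteq> 0" "b \<noteq> 0"
    and le: "multiplicity (int p) a \<le> multiplicity (int p) b"
    and cong: "[multiplicity (int p) a = multiplicity (int p) b] (mod n)"
  shows "\<exists>x \<in> ratio_set (\<lambda>v. a * v 0 ^ n + b * v 1 ^ n). padic_abs p (x - q) \<le> 1 / real p ^ N"
proof -
  define P where "P = int p"
  have "\<not> is_unit P" and P0: "P \<noteq> 0"
    using p prime_gt_1_nat[of p] by (auto simp: P_def)
  have coprime_P: "coprime x (P ^ M)" if "\<not> P dvd x" for x M
    using prime_imp_coprime[of P x] that p by (simp add: P_def coprime_commute)
  obtain a' where a': "a = P ^ multiplicity P a * a'" "\<not> P dvd a'"
    using multiplicity_decompose' \<open>a \<noteq> 0\<close> \<open>\<not> is_unit P\<close> by blast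
  obtain b' where b': "b = P ^ multiplicity P b * b'" "\<not> P dvd b'"
    using multiplicity_decompose' \<open>b \<noteq> 0\<close> \<open>\<not> is_unit P\<close> by blast
  obtain k where k: "multiplicity P b = k * n + multiplicity P a"
    using cong le cong_le_nat by (metis P_def cong_sym)
  obtain e A W where W: "\<not> P dvd W" and q: "q = of_int A / (of_nat p ^ e * of_int W)"
    using rat_eq_div_prime_power_times_coprime[OF p] unfolding P_def by blast
  define E where "E = e * n"
  define Y where "Y = A * P ^ (e * (n - 1))"
  have "E = e + e * (n - 1)"
    using n by (cases n) (simp_all add: E_def)
  then have q': "q = of_int Y / (of_nat p ^ E * of_int W)"
    using P0 by (simp add: q Y_def P_def power_add)
  obtain w where w: "[W * w = 1] (mod P ^ (N + E))"
    using cong_solve_coprime_int coprime_P[OF W] by blast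
  obtain s t where st: "[a' * s ^ n + b' * t ^ n = a' * Y * w] (mod P ^ (N + E))"
    using cong_solve_binary_form_prime_power[OF p n coprime_totient_prime_power[OF p coprime_n]]
      a'(2) b'(2) unfolding P_def by blast
  define V where "V = a' * s ^ n + b' * t ^ n"
  have "[V * W = a' * Y * (W * w)] (mod P ^ (N + E))"
    using cong_scalar_right[OF st, of W] by (simp add: V_def ac_simps)
  also have "[a' * Y * (W * w) = a' * Y * 1] (mod P ^ (N + E))"
    by (intro cong_scalar_left w)
  finally have "[V * W = Y * a'] (mod int p ^ (N + E))" by (simp add: P_def ac_simps)
  then have "padic_abs p (of_int V / (of_nat p ^ E * of_int a') - q) \<le> 1 / real p ^ N"
    unfolding q' using padic_abs_diff_le_if_cong p a'(2) W unfolding P_def by blast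
  moreover have "of_int V / (of_nat p ^ E * of_int a') \<in> ratio_set (\<lambda>v. a * v 0 ^ n + b * v 1 ^ n)"
    using binary_form_ratio_mem_ratio_set[OF P0 _ n a'(1) b'(1)[unfolded k]] a'(2)
    by (auto simp: V_def E_def P_def)
  ultimately show ?thesis by blast
qed

lemma padic_denseI:
  assumes "p > 1" and "\<And>q N. \<exists>x \<in> S. padic_abs p (x - q) \<le> 1 / real p ^ N"
  shows "padic_dense p S"
  unfolding padic_dense_def
proof (intro allI impI)
  fix q :: rat and \<epsilon> :: real
  assume "\<epsilon> > 0"
  then obtain N where "(1 / real p) ^ N < \<epsilon>"
    using real_arch_pow_inv[of \<epsilon> "1 / real p"] \<open>p > 1\<close> by auto
  with assms(2)[of q N] show "\<exists>x \<in> S. padic_abs p (x - q) < \<epsilon>"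
    by (force simp: power_one_over)
qed

lemma padic_dense_mono: "padic_dense p S \<Longrightarrow> S \<subseteq> T \<Longrightarrow> padic_dense p T"
  unfolding padic_dense_def by blast

lemma ratio_set_subset_if_substitution:
  assumes "\<And>v. F v = G (\<sigma> v)"
  shows "ratio_set F \<subseteq> ratio_set G"
  unfolding ratio_set_def assms by blast

lemma diagonal_form_ratio_set_contains_binary:
  fixes a :: "nat \<Rightarrow> int"
  assumes "i < j" "j < r" "n > 0"
  shows "ratio_set (\<lambda>v. a i * v 0 ^ n + a j * v 1 ^ n) \<subseteq> ratio_set (\<lambda>v. \<Sum>k<r. a k * v k ^ n)"
proof (rule ratio_set_subset_if_substitution)
  fix v :: "nat \<Rightarrow> int"
  let ?w = "\<lambda>k. if k = i then v 0 else if k = j then v 1 else 0"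
  have "(\<Sum>k<r. a k * ?w k ^ n)
      = (\<Sum>k<r. (if k = i then a i * v 0 ^ n else 0) + (if k = j then a j * v 1 ^ n else 0))"
    using assms by (intro sum.cong) auto
  then show "a i * v 0 ^ n + a j * v 1 ^ n = (\<Sum>k<r. a k * ?w k ^ n)"
    using assms by (simp add: sum.distrib)
qed

lemma padic_dense_binary_form_ratios:
  fixes a b :: int
  assumes "prime p" "n > 0" "coprime n (p * (p - 1))" "a \<noteq> 0" "b \<noteq> 0"
    and cong: "[multiplicity (int p) a = multiplicity (int p) b] (mod n)"
  shows "padic_dense p (ratio_set (\<lambda>v. a * v 0 ^ n + b * v 1 ^ n))"
proof (cases "multiplicity (int p) a \<le> multiplicity (int p) b")
  case True
  then show ?thesis
    using assms binary_form_ratios_approximate prime_gt_1_nat by (intro padic_denseI) blast+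
next
  case False
  then have "padic_dense p (ratio_set (\<lambda>v. b * v 0 ^ n + a * v 1 ^ n))"
    using assms binary_form_ratios_approximate[of p n b a] prime_gt_1_nat cong_sym[OF cong]
    by (intro padic_denseI) auto
  moreover have "ratio_set (\<lambda>v. b * v 0 ^ n + a * v 1 ^ n)
      \<subseteq> ratio_set (\<lambda>v. a * v 0 ^ n + b * v 1 ^ n)"
    by (rule ratio_set_subset_if_substitution[where \<sigma> = "\<lambda>v i. if i = 0 then v 1 else v 0"]) simp
  ultimately show ?thesis by (rule padic_dense_mono)
qed

theorem corollary1p2:
  fixes n p :: nat
  assumes "n \<ge> 3" and "prime p" and "coprime n (p * (p - 1))"
  shows "(\<forall>a b :: int. a * b \<noteq> 0 \<longrightarrow>
            [multiplicity (int p) a = multiplicity (int p) b] (mod n) \<longrightarrow>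
            padic_dense p (ratio_set (\<lambda>v. a * v 0 ^ n + b * v 1 ^ n)))
       \<and> (\<forall>(r::nat) (a :: nat \<Rightarrow> int). r \<ge> 2 \<longrightarrow> (\<Prod>i<r. a i) \<noteq> 0 \<longrightarrow>
            (\<exists>i j. i < j \<and> j < r \<and>
               [multiplicity (int p) (a i) = multiplicity (int p) (a j)] (mod n)) \<longrightarrow>
            padic_dense p (ratio_set (\<lambda>v. \<Sum>i<r. a i * v i ^ n)))"
proof -
  have n: "n > 0" using assms(1) by simp
  note binary = padic_dense_binary_form_ratios[OF assms(2) n assms(3)]
  show ?thesis
  proof (intro conjI allI impI)
    fix a b :: int
    assume "a * b \<noteq> 0" "[multiplicity (int p) a = multiplicity (int p) b] (mod n)"
    then show "padic_dense p (ratio_set (\<lambda>v. a * v 0 ^ n + b * v 1 ^ n))"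
      using binary by simp
  next
    fix r :: nat and a :: "nat \<Rightarrow> int"
    assume "(\<Prod>i<r. a i) \<noteq> 0" and "\<exists>i j. i < j \<and> j < r \<and>
      [multiplicity (int p) (a i) = multiplicity (int p) (a j)] (mod n)"
    then obtain i j where ij: "i < j" "j < r" "a i \<noteq> 0" "a j \<noteq> 0"
      and cong: "[multiplicity (int p) (a i) = multiplicity (int p) (a j)] (mod n)" by auto
    show "padic_dense p (ratio_set (\<lambda>v. \<Sum>i<r. a i * v i ^ n))"
      using binary[OF ij(3,4) cong] diagonal_form_ratio_set_contains_binary[OF ij(1,2) n]
      by (rule padic_dense_mono)
  qed
qed

end
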